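(* Let $x_1,\dots,x_n\in\mathbb{R}^d$ with $\|x_i\|=1$ for all $i$ and $x_i\not\parallel x_j$ for all $i\ne j$. Then $\lambda_0:=\lambda_{\min}(G^\infty)>0$, where $G^\infty=\mathbb{E}_{w\sim N(0,I_d)}[\sigma(Xw)\sigma(Xw)^T]\in\mathbb{R}^{n\times n}$.
   Context: $X\in\mathbb{R}^{n\times d}$ has rows $x_i^T$; $\sigma(s)=\max\{0,s\}$ applied entrywise. $x_i\not\parallel x_j$ means $x_i$ is not a scalar multiple of $x_j$. *)

theory Defs
  imports "HOL-Probability.Probability" "Jordan_Normal_Form.Char_Poly"
begin

definition relu :: "real \<Rightarrow> real" where
  "relu s = max 0 s"

definition std_gaussian :: "(real ^ 'd) measure" where
  "std_gaussian = density lborel (\<lambda>w. ennreal (\<Prod>i\<in>UNIV. std_normal_density (w $ i)))"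

definition G_inf :: "nat \<Rightarrow> (nat \<Rightarrow> real ^ 'd) \<Rightarrow> real mat" where
  "G_inf n x = mat n n (\<lambda>(i, j).
      integral\<^sup>L std_gaussian (\<lambda>w. relu (x i \<bullet> w) * relu (x j \<bullet> w)))"

text \<open>Smallest eigenvalue of a (real, square) matrix whose eigenvalues are real.\<close>
definition lambda_min :: "real mat \<Rightarrow> real" where
  "lambda_min A = Min {k. eigenvalue A k}"

end

theory Submission
  imports Defs "Jordan_Normal_Form.Spectral_Radius"
begin

text \<open>
  \<open>G\<^sup>\<infinity>\<close> is symmetric, so its eigenvalues are real, and \<open>\<lambda>\<^sub>0 > 0\<close> once \<open>G\<^sup>\<infinity>\<close> is
  positive definite. Since \<open>v\<^sup>T G\<^sup>\<infinity> v = \<bbbE>[(\<Sum>\<^sub>i v\<^sub>i \<sigma>(x\<^sub>i\<^sup>T w))\<^sup>2]\<close>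
  and the Gaussian density is everywhere positive, a vanishing form forces the continuous
  function \<open>w \<mapsto> \<Sum>\<^sub>i v\<^sub>i \<sigma>(x\<^sub>i\<^sup>T w)\<close> to vanish identically. Its second difference
  along \<open>x\<^sub>m\<close> at a point \<open>p \<perp> x\<^sub>m\<close> that lies on none of the other kinks
  \<open>x\<^sub>j\<^sup>\<perp>\<close> (possible because no \<open>x\<^sub>j\<close> is parallel to \<open>x\<^sub>m\<close>) only sees the kink of the
  \<open>m\<close>-th neuron, so \<open>v\<^sub>m = 0\<close>.
\<close>

lemma pos_definite_eigenvalue_pos:
  fixes A :: "real mat"
  assumes A: "A \<in> carrier_mat n n"
    and pos: "\<And>v. v \<in> carrier_vec n \<Longrightarrow> v \<noteq> 0\<^sub>v n \<Longrightarrow> v \<bullet> (A *\<^sub>v v) > 0"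
    and "eigenvalue A k"
  shows "k > 0"
proof -
  obtain v where "eigenvector A v k"
    using \<open>eigenvalue A k\<close> unfolding eigenvalue_def by blast
  then have v: "v \<in> carrier_vec n" "v \<noteq> 0\<^sub>v n" "A *\<^sub>v v = k \<cdot>\<^sub>v v"
    using A unfolding eigenvector_def by auto
  have "0 < v \<bullet> (A *\<^sub>v v)"
    using pos v by blast
  also have "\<dots> = k * (v \<bullet> v)"
    using v by simp
  finally show ?thesis
    using conjugate_square_greater_0_vec[OF v(1)] v(2) by (simp add: zero_less_mult_iff)
qed

lemma conjugate_of_real_mat_mult_vec:
  fixes A :: "real mat" and v :: "complex vec"
  assumes "A \<in> carrier_mat nr nc" and "v \<in> carrier_vec nc"
  shows "conjugate (map_mat complex_of_real A *\<^sub>v v) = map_mat complex_of_real A *\<^sub>v conjugate v"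
  using assms by (intro eq_vecI) (auto simp: scalar_prod_def sum_conjugate conjugate_dist_mul)

lemma symmetric_real_mat_has_eigenvalue:
  fixes A :: "real mat"
  assumes A: "A \<in> carrier_mat n n" and "n > 0" and sym: "transpose_mat A = A"
  obtains k where "eigenvalue A k"
proof -
  define Ac where "Ac = map_mat complex_of_real A"
  have Ac: "Ac \<in> carrier_mat n n"
    using A unfolding Ac_def by simp
  have sym_Ac: "transpose_mat Ac = Ac"
    unfolding Ac_def map_mat_transpose sym ..
  obtain z where "eigenvalue Ac z"
    using spectrum_non_empty[OF Ac \<open>n > 0\<close>] unfolding spectrum_def by blast
  then obtain v where "eigenvector Ac v z"
    unfolding eigenvalue_def by blast
  then have v: "v \<in> carrier_vec n" "v \<noteq> 0\<^sub>v n" "Ac *\<^sub>v v = z \<cdot>\<^sub>v v"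
    using Ac unfolding eigenvector_def by auto
  have "z * (v \<bullet>c v) = (Ac *\<^sub>v v) \<bullet>c v"
    using v by simp
  also have "\<dots> = v \<bullet> (Ac *\<^sub>v conjugate v)"
    using transpose_vec_mult_scalar[OF Ac, of "conjugate v" v] v(1) sym_Ac by simp
  also have "\<dots> = v \<bullet>c (Ac *\<^sub>v v)"
    using conjugate_of_real_mat_mult_vec[OF A v(1)] unfolding Ac_def by simp
  also have "\<dots> = cnj z * (v \<bullet>c v)"
    using v by (simp add: conjugate_smult_vec)
  finally have "cnj z = z"
    using conjugate_square_greater_0_vec[OF v(1)] v(2) by auto
  then have z: "z = complex_of_real (Re z)"
    by (simp add: complex_eq_iff)
  have "poly (char_poly Ac) z = 0"
    using \<open>eigenvalue Ac z\<close> eigenvalue_root_char_poly[OF Ac] by simp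
  then have "poly (char_poly A) (Re z) = 0"
    unfolding Ac_def of_real_hom.char_poly_hom[OF A] by (subst (asm) z) simp
  then show ?thesis
    using that eigenvalue_root_char_poly[OF A] by blast
qed

lemma lambda_min_pos:
  fixes A :: "real mat"
  assumes A: "A \<in> carrier_mat n n" and "n > 0" and "transpose_mat A = A"
    and "\<And>v. v \<in> carrier_vec n \<Longrightarrow> v \<noteq> 0\<^sub>v n \<Longrightarrow> v \<bullet> (A *\<^sub>v v) > 0"
  shows "lambda_min A > 0"
proof -
  obtain k where "eigenvalue A k"
    using symmetric_real_mat_has_eigenvalue assms(1-3) by blast
  then show ?thesis
    using card_finite_spectrum(1)[OF A] pos_definite_eigenvalue_pos[OF A assms(4)]
    unfolding lambda_min_def spectrum_def by (subst Min_gr_iff) auto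
qed

lemma scalar_prod_mult_mat_vec_eq_sum:
  fixes A :: "'a::comm_semiring_0 mat"
  assumes "A \<in> carrier_mat n n" and "v \<in> carrier_vec n"
  shows "v \<bullet> (A *\<^sub>v v) = (\<Sum>i<n. \<Sum>j<n. v $ i * v $ j * A $$ (i, j))"
  using assms by (simp add: scalar_prod_def lessThan_atLeast0 sum_distrib_left mult_ac)

lemma relu_midpoint:
  assumes "\<bar>s\<bar> \<le> \<bar>a\<bar>"
  shows "relu (a + s) + relu (a - s) = 2 * relu a"
  using assms unfolding relu_def by auto

lemma relu_measurable[measurable]: "relu \<in> borel_measurable borel"
  unfolding relu_def[abs_def] by measurable

lemma continuous_on_relu[continuous_intros]:
  "continuous_on S f \<Longrightarrow> continuous_on S (\<lambda>x. relu (f x))"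
  unfolding relu_def by (intro continuous_intros)

lemma abs_relu_le: "\<bar>relu s\<bar> \<le> \<bar>s\<bar>"
  unfolding relu_def by auto

lemma hyperplane_ex_not_orthogonal:
  fixes a :: "'a::real_inner"
  assumes "finite S" and "\<And>u. u \<in> S \<Longrightarrow> u \<noteq> 0 \<and> a \<bullet> u = 0"
  shows "\<exists>p. a \<bullet> p = 0 \<and> (\<forall>u\<in>S. u \<bullet> p \<noteq> 0)"
  using assms
proof (induction S rule: finite_induct)
  case empty
  show ?case
    by (intro exI[of _ 0]) simp
next
  case (insert u S)
  then obtain p where p: "a \<bullet> p = 0" "\<forall>v\<in>S. v \<bullet> p \<noteq> 0"
    by auto
  have u: "u \<noteq> 0" "a \<bullet> u = 0"
    using insert.prems by auto
  show ?case
  proof (cases "u \<bullet> p = 0")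
    case False
    with p show ?thesis by auto
  next
    case True
    define B where "B = insert 0 ((\<lambda>v. - (v \<bullet> p) / (v \<bullet> u)) ` S)"
    have "finite B"
      unfolding B_def using insert.hyps(1) by simp
    then obtain s :: real where s: "s \<notin> B"
      using ex_new_if_finite[OF infinite_UNIV_char_0] by blast
    have "a \<bullet> (p + s *\<^sub>R u) = 0"
      using p(1) u(2) by (simp add: inner_add_right)
    moreover have "u \<bullet> (p + s *\<^sub>R u) \<noteq> 0"
      using True s u(1) unfolding B_def by (simp add: inner_add_right)
    moreover have "v \<bullet> (p + s *\<^sub>R u) \<noteq> 0" if "v \<in> S" for v
    proof
      assume "v \<bullet> (p + s *\<^sub>R u) = 0"
      then have "v \<bullet> p + s * (v \<bullet> u) = 0"
        by (simp add: inner_add_right)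
      moreover have "v \<bullet> u \<noteq> 0"
        using calculation p(2) that by auto
      ultimately have "s = - (v \<bullet> p) / (v \<bullet> u)"
        by (simp add: field_simps)
      then show False
        using s that unfolding B_def by blast
    qed
    ultimately show ?thesis by auto
  qed
qed

lemma relu_ridge_combination_eq_0_imp_coeff_eq_0:
  fixes x :: "'i \<Rightarrow> 'a::real_inner" and c :: "'i \<Rightarrow> real"
  assumes "finite I" and "m \<in> I" and "x m \<noteq> 0"
    and nonparallel: "\<And>j. j \<in> I \<Longrightarrow> j \<noteq> m \<Longrightarrow> \<not> (\<exists>t. x j = t *\<^sub>R x m)"
    and zero: "\<And>w. (\<Sum>i\<in>I. c i * relu (x i \<bullet> w)) = 0"
  shows "c m = 0"
proof -
  define q where "q = x m"
  define J where "J = I - {m}"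
  define u where "u j = x j - (x j \<bullet> q / (q \<bullet> q)) *\<^sub>R q" for j
  have qq: "q \<bullet> q > 0"
    using \<open>x m \<noteq> 0\<close> unfolding q_def by simp
  have "finite J"
    using \<open>finite I\<close> unfolding J_def by simp
  have u_orth: "u j \<noteq> 0 \<and> q \<bullet> u j = 0" if "j \<in> J" for j
  proof
    show "u j \<noteq> 0"
      using nonparallel that unfolding J_def u_def q_def by auto
    show "q \<bullet> u j = 0"
      using qq unfolding u_def by (simp add: inner_diff_right inner_commute)
  qed
  have "\<exists>p. q \<bullet> p = 0 \<and> (\<forall>v\<in>u ` J. v \<bullet> p \<noteq> 0)"
    by (rule hyperplane_ex_not_orthogonal) (use \<open>finite J\<close> u_orth in auto)
  then obtain p where p: "q \<bullet> p = 0" "\<forall>j\<in>J. u j \<bullet> p \<noteq> 0"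
    by auto
  have xp: "x j \<bullet> p \<noteq> 0" if "j \<in> J" for j
  proof -
    have "u j \<bullet> p = x j \<bullet> p"
      unfolding u_def using p(1) by (simp add: inner_diff_left inner_commute[of p])
    with p(2) that show ?thesis
      by metis
  qed
  define h where "h = Min (insert 1 ((\<lambda>j. \<bar>x j \<bullet> p\<bar> / (1 + \<bar>x j \<bullet> q\<bar>)) ` J))"
  have h: "h > 0"
    using xp \<open>finite J\<close> unfolding h_def by (subst Min_gr_iff) (auto intro!: divide_pos_pos)
  have small: "\<bar>h * (x j \<bullet> q)\<bar> \<le> \<bar>x j \<bullet> p\<bar>" if "j \<in> J" for j
  proof -
    have "h \<le> \<bar>x j \<bullet> p\<bar> / (1 + \<bar>x j \<bullet> q\<bar>)"
      unfolding h_def using \<open>finite J\<close> that by (intro Min_le) auto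
    then have "h * (1 + \<bar>x j \<bullet> q\<bar>) \<le> \<bar>x j \<bullet> p\<bar>"
      by (simp add: pos_le_divide_eq add_pos_nonneg)
    then show ?thesis
      using h by (simp add: abs_mult algebra_simps)
  qed
  define D where "D i = relu (x i \<bullet> (p + h *\<^sub>R q)) + relu (x i \<bullet> (p - h *\<^sub>R q)) - 2 * relu (x i \<bullet> p)" for i
  have "(\<Sum>i\<in>I. c i * D i) = (\<Sum>i\<in>I. c i * relu (x i \<bullet> (p + h *\<^sub>R q)))
      + (\<Sum>i\<in>I. c i * relu (x i \<bullet> (p - h *\<^sub>R q))) - 2 * (\<Sum>i\<in>I. c i * relu (x i \<bullet> p))"
    unfolding D_def by (simp add: algebra_simps sum.distrib sum_subtractf sum_distrib_left)
  then have "(\<Sum>i\<in>I. c i * D i) = 0"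
    unfolding zero by simp
  moreover have "D j = 0" if "j \<in> J" for j
    using relu_midpoint[OF small[OF that]] unfolding D_def by (simp add: inner_add_right inner_diff_right)
  moreover have "D m = h * (q \<bullet> q)"
    using h qq p(1) unfolding D_def q_def relu_def by (simp add: inner_add_right inner_diff_right)
  ultimately have "c m * (h * (q \<bullet> q)) = 0"
    using sum.remove[OF \<open>finite I\<close> \<open>m \<in> I\<close>, of "\<lambda>i. c i * D i"] unfolding J_def by simp
  then show ?thesis
    using h qq by simp
qed

definition gaussian_density :: "real ^ 'd \<Rightarrow> real" where
  "gaussian_density w = (\<Prod>i\<in>UNIV. std_normal_density (w $ i))"

lemma gaussian_density_pos: "gaussian_density w > 0"
  unfolding gaussian_density_def by (intro prod_pos) (simp add: normal_density_pos)

lemma gaussian_density_measurable[measurable]: "gaussian_density \<in> borel_measurable borel"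
  unfolding gaussian_density_def by measurable

lemma std_gaussian_eq_density: "std_gaussian = density lborel (\<lambda>w. ennreal (gaussian_density w))"
  unfolding std_gaussian_def gaussian_density_def ..

lemma sets_std_gaussian[simp, measurable_cong]: "sets std_gaussian = sets borel"
  unfolding std_gaussian_eq_density by simp

lemma AE_std_gaussian_iff: "(AE w in std_gaussian. P w) \<longleftrightarrow> (AE w in lborel. P w)"
  unfolding std_gaussian_eq_density by (subst AE_density) (auto simp: gaussian_density_pos)

lemma integrable_std_gaussian_iff:
  assumes "f \<in> borel_measurable borel"
  shows "integrable std_gaussian f \<longleftrightarrow> integrable lborel (\<lambda>w. gaussian_density w * f w)"
  unfolding std_gaussian_eq_density using assms
  by (subst integrable_density) (auto intro: less_imp_le[OF gaussian_density_pos])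

lemma Basis_vec_real: "(Basis :: (real ^ 'n) set) = range (\<lambda>i. axis i 1)"
  unfolding Basis_vec_def by auto

lemma nn_integral_gaussian_coordinate_sq_finite:
  fixes k :: "'d::finite"
  shows "(\<integral>\<^sup>+w. ennreal (gaussian_density w * (w $ k)\<^sup>2) \<partial>(lborel :: (real ^ 'd) measure)) < \<infinity>"
proof -
  define f :: "real ^ 'd \<Rightarrow> real \<Rightarrow> ennreal" where
    "f b t = ennreal (std_normal_density t * (if b = axis k 1 then t\<^sup>2 else 1))" for b t
  have inj: "inj (\<lambda>i::'d. axis i (1::real))"
    by (auto intro!: injI simp: axis_eq_axis)
  have prod: "ennreal (gaussian_density w * (w $ k)\<^sup>2) = (\<Prod>b\<in>Basis. f b (w \<bullet> b))" for w :: "real ^ 'd"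
  proof -
    have "(\<Prod>b\<in>Basis. f b (w \<bullet> b)) = (\<Prod>i\<in>UNIV. f (axis i 1) (w $ i))"
      unfolding Basis_vec_real by (subst prod.reindex[OF inj]) (simp add: inner_axis)
    also have "\<dots> = ennreal (\<Prod>i\<in>UNIV. std_normal_density (w $ i) * (if i = k then (w $ i)\<^sup>2 else 1))"
      unfolding f_def by (subst prod_ennreal) (simp_all add: normal_density_nonneg axis_eq_axis)
    also have "\<dots> = ennreal (gaussian_density w * (w $ k)\<^sup>2)"
      unfolding gaussian_density_def prod.distrib by (simp add: prod.delta)
    finally show ?thesis ..
  qed
  have "(\<integral>\<^sup>+t. f b t \<partial>lborel) < \<infinity>" for b
  proof -
    have "integrable lborel (\<lambda>t. std_normal_density t * (if b = axis k 1 then t\<^sup>2 else 1))"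
      using integrable_std_normal_moment[of 2] integrable_std_normal_moment[of 0]
      by (cases "b = axis k 1") simp_all
    then show ?thesis
      unfolding f_def by (simp add: integrable_iff_bounded normal_density_nonneg)
  qed
  then have "(\<Prod>b\<in>Basis. (\<integral>\<^sup>+t. f b t \<partial>lborel)) < \<infinity>"
    by (auto simp: less_top[symmetric] ennreal_prod_eq_top)
  moreover have "(\<integral>\<^sup>+w. ennreal (gaussian_density w * (w $ k)\<^sup>2) \<partial>lborel)
      = (\<Prod>b\<in>Basis. (\<integral>\<^sup>+t. f b t \<partial>lborel))"
    unfolding prod by (rule nn_integral_lborel_prod) (auto simp: f_def)
  ultimately show ?thesis
    by simp
qed

lemma integrable_std_gaussian_coordinate_sq: "integrable std_gaussian (\<lambda>w::real ^ 'd. (w $ k)\<^sup>2)"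
proof -
  have "(\<lambda>w::real ^ 'd. (w $ k)\<^sup>2) \<in> borel_measurable borel"
    by measurable
  moreover have "integrable lborel (\<lambda>w::real ^ 'd. gaussian_density w * (w $ k)\<^sup>2)"
    using nn_integral_gaussian_coordinate_sq_finite[of k]
    by (intro integrableI_nonneg) (auto intro!: AE_I2 mult_nonneg_nonneg less_imp_le[OF gaussian_density_pos])
  ultimately show ?thesis
    using integrable_std_gaussian_iff by blast
qed

lemma integrable_std_gaussian_norm_sq: "integrable std_gaussian (\<lambda>w::real ^ 'd. (norm w)\<^sup>2)"
proof -
  have "(\<lambda>w::real ^ 'd. (norm w)\<^sup>2) = (\<lambda>w. \<Sum>k\<in>UNIV. (w $ k)\<^sup>2)"
    unfolding power2_norm_eq_inner inner_vec_def by (simp add: power2_eq_square)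
  moreover have "integrable std_gaussian (\<lambda>w::real ^ 'd. \<Sum>k\<in>UNIV. (w $ k)\<^sup>2)"
    by (intro Bochner_Integration.integrable_sum integrable_std_gaussian_coordinate_sq)
  ultimately show ?thesis
    by simp
qed

lemma integrable_relu_inner_mult:
  fixes a b :: "real ^ 'd"
  shows "integrable std_gaussian (\<lambda>w. relu (a \<bullet> w) * relu (b \<bullet> w))"
proof (rule Bochner_Integration.integrable_bound)
  show "integrable std_gaussian (\<lambda>w. norm a * norm b * (norm w)\<^sup>2)"
    by (intro integrable_mult_right integrable_std_gaussian_norm_sq)
  show "(\<lambda>w. relu (a \<bullet> w) * relu (b \<bullet> w)) \<in> borel_measurable std_gaussian"
    by measurable
  have relu_le: "\<bar>relu (c \<bullet> w)\<bar> \<le> norm c * norm w" for c w :: "real ^ 'd"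
    using abs_relu_le[of "c \<bullet> w"] Cauchy_Schwarz_ineq2[of c w] by linarith
  have "\<bar>relu (a \<bullet> w) * relu (b \<bullet> w)\<bar> \<le> norm a * norm b * (norm w)\<^sup>2" for w
  proof -
    have "\<bar>relu (a \<bullet> w) * relu (b \<bullet> w)\<bar> \<le> (norm a * norm w) * (norm b * norm w)"
      unfolding abs_mult by (intro mult_mono relu_le) simp_all
    then show ?thesis
      by (simp add: power2_eq_square mult_ac)
  qed
  then show "AE w in std_gaussian. norm (relu (a \<bullet> w) * relu (b \<bullet> w)) \<le> norm (norm a * norm b * (norm w)\<^sup>2)"
    by simp
qed

lemma continuous_AE_eq_0_imp_eq_0:
  fixes F :: "'a::euclidean_space \<Rightarrow> real"
  assumes "continuous_on UNIV F" and "AE w in lborel. F w = 0"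
  shows "F w = 0"
proof (rule ccontr)
  assume "F w \<noteq> 0"
  define U where "U = {w. F w \<noteq> 0}"
  have "open U"
    unfolding U_def using assms(1) by (intro open_Collect_neq) (auto intro: continuous_intros)
  then obtain e where e: "e > 0" "ball w e \<subseteq> U"
    using \<open>F w \<noteq> 0\<close> unfolding U_def open_contains_ball by blast
  have "U \<in> sets lborel"
    using \<open>open U\<close> by simp
  then have "emeasure lborel U = 0"
    using assms(2) AE_iff_measurable[of U lborel "\<lambda>w. F w = 0"] unfolding U_def by simp
  then have "emeasure lborel (ball w e) = 0"
    using emeasure_mono[OF e(2) \<open>U \<in> sets lborel\<close>] by simp
  moreover have "measure lborel (ball w e) > 0"
    using content_ball_pos[OF e(1)] by simp
  ultimately show False
    by (simp add: measure_def)
qed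

lemma integral_std_gaussian_sq_eq_0_imp_eq_0:
  fixes F :: "real ^ 'd \<Rightarrow> real"
  assumes "continuous_on UNIV F" and "integrable std_gaussian (\<lambda>w. (F w)\<^sup>2)"
    and "(\<integral>w. (F w)\<^sup>2 \<partial>std_gaussian) = 0"
  shows "F w = 0"
proof -
  have "AE w in std_gaussian. (F w)\<^sup>2 = 0"
    using integral_nonneg_eq_0_iff_AE[OF assms(2)] assms(3) by simp
  then have "AE w in lborel. F w = 0"
    unfolding AE_std_gaussian_iff by simp
  then show ?thesis
    using continuous_AE_eq_0_imp_eq_0[OF assms(1)] by blast
qed

lemma integral_sum_square:
  fixes f :: "'i \<Rightarrow> 'a \<Rightarrow> real"
  assumes "finite I" and int: "\<And>i j. i \<in> I \<Longrightarrow> j \<in> I \<Longrightarrow> integrable M (\<lambda>w. f i w * f j w)"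
  shows "(\<Sum>i\<in>I. \<Sum>j\<in>I. c i * c j * (\<integral>w. f i w * f j w \<partial>M)) = (\<integral>w. (\<Sum>i\<in>I. c i * f i w)\<^sup>2 \<partial>M)"
proof -
  have "(\<integral>w. (\<Sum>i\<in>I. c i * f i w)\<^sup>2 \<partial>M) = (\<integral>w. (\<Sum>i\<in>I. \<Sum>j\<in>I. c i * c j * (f i w * f j w)) \<partial>M)"
    unfolding power2_eq_square sum_product by (simp add: mult_ac)
  also have "\<dots> = (\<Sum>i\<in>I. \<Sum>j\<in>I. c i * c j * (\<integral>w. f i w * f j w \<partial>M))"
    using int by (simp add: Bochner_Integration.integral_sum Bochner_Integration.integrable_sum)
  finally show ?thesis ..
qed

lemma G_inf_carrier: "G_inf n x \<in> carrier_mat n n"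
  unfolding G_inf_def by simp

lemma transpose_G_inf: "transpose_mat (G_inf n x) = G_inf n x"
  unfolding G_inf_def by (rule eq_matI) (auto simp: mult.commute)

lemma G_inf_quadratic_form:
  assumes "v \<in> carrier_vec n"
  shows "v \<bullet> (G_inf n x *\<^sub>v v) = (\<integral>w. (\<Sum>i<n. v $ i * relu (x i \<bullet> w))\<^sup>2 \<partial>std_gaussian)"
proof -
  have "v \<bullet> (G_inf n x *\<^sub>v v)
      = (\<Sum>i<n. \<Sum>j<n. v $ i * v $ j * (\<integral>w. relu (x i \<bullet> w) * relu (x j \<bullet> w) \<partial>std_gaussian))"
    unfolding scalar_prod_mult_mat_vec_eq_sum[OF G_inf_carrier assms] by (simp add: G_inf_def)
  also have "\<dots> = (\<integral>w. (\<Sum>i<n. v $ i * relu (x i \<bullet> w))\<^sup>2 \<partial>std_gaussian)"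
    by (rule integral_sum_square) (simp_all add: integrable_relu_inner_mult)
  finally show ?thesis .
qed

lemma integrable_relu_combination_sq:
  fixes x :: "'i \<Rightarrow> real ^ 'd"
  assumes "finite I"
  shows "integrable std_gaussian (\<lambda>w. (\<Sum>i\<in>I. c i * relu (x i \<bullet> w))\<^sup>2)"
  unfolding power2_eq_square sum_product
  by (intro Bochner_Integration.integrable_sum integrable_mult_right)
     (simp_all add: assms mult.assoc mult.left_commute[of "relu _"] integrable_relu_inner_mult)

lemma G_inf_pos_definite:
  fixes x :: "nat \<Rightarrow> real ^ 'd"
  assumes nonzero: "\<And>i. i < n \<Longrightarrow> x i \<noteq> 0"
    and nonparallel: "\<And>i j. i < n \<Longrightarrow> j < n \<Longrightarrow> i \<noteq> j \<Longrightarrow> \<not> (\<exists>t. x i = t *\<^sub>R x j)"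
    and v: "v \<in> carrier_vec n" "v \<noteq> 0\<^sub>v n"
  shows "v \<bullet> (G_inf n x *\<^sub>v v) > 0"
proof -
  define F where "F w = (\<Sum>i<n. v $ i * relu (x i \<bullet> w))" for w
  have form: "v \<bullet> (G_inf n x *\<^sub>v v) = (\<integral>w. (F w)\<^sup>2 \<partial>std_gaussian)"
    unfolding F_def by (rule G_inf_quadratic_form[OF v(1)])
  have "(\<integral>w. (F w)\<^sup>2 \<partial>std_gaussian) \<noteq> 0"
  proof
    assume "(\<integral>w. (F w)\<^sup>2 \<partial>std_gaussian) = 0"
    then have F: "F w = 0" for w
    proof (rule integral_std_gaussian_sq_eq_0_imp_eq_0[rotated 2])
      show "continuous_on UNIV F"
        unfolding F_def by (intro continuous_intros)
      show "integrable std_gaussian (\<lambda>w. (F w)\<^sup>2)"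
        unfolding F_def by (rule integrable_relu_combination_sq) simp
    qed
    have "v $ m = 0" if "m < n" for m
    proof (rule relu_ridge_combination_eq_0_imp_coeff_eq_0[of "{..<n}" m x])
      show "\<not> (\<exists>t. x j = t *\<^sub>R x m)" if "j \<in> {..<n}" "j \<noteq> m" for j
        using nonparallel \<open>m < n\<close> that by auto
      show "(\<Sum>i<n. v $ i * relu (x i \<bullet> w)) = 0" for w
        using F unfolding F_def .
    qed (use that nonzero in auto)
    with v show False
      by (auto intro!: eq_vecI)
  qed
  moreover have "(\<integral>w. (F w)\<^sup>2 \<partial>std_gaussian) \<ge> 0"
    by simp
  ultimately show ?thesis
    using form by linarith
qed

theorem lemma5:
  fixes n :: nat and x :: "nat \<Rightarrow> real ^ 'd"
  assumes "n \<ge> 1"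
    and "\<And>i. i < n \<Longrightarrow> norm (x i) = 1"
    and "\<And>i j. i < n \<Longrightarrow> j < n \<Longrightarrow> i \<noteq> j \<Longrightarrow> \<not> (\<exists>c::real. x i = c *\<^sub>R x j)"
  shows "lambda_min (G_inf n x) > 0"
proof (rule lambda_min_pos[OF G_inf_carrier _ transpose_G_inf])
  show "n > 0"
    using assms(1) by simp
  have "x i \<noteq> 0" if "i < n" for i
    using assms(2)[OF that] by auto
  then show "v \<bullet> (G_inf n x *\<^sub>v v) > 0" if "v \<in> carrier_vec n" "v \<noteq> 0\<^sub>v n" for v
    using G_inf_pos_definite assms(3) that by blast
qed

end
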